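(* Let $P$ and $Q$ be tangent planes in $\mathbb{H}^4$, i.e. distinct planes that are disjoint in $\mathbb{H}^4$ and whose boundaries at infinity meet in exactly one point. Then $H_PH_Q$ is a parabolic isometry.
   Context: A plane is a $2$-dimensional totally geodesic subspace of $\mathbb{H}^4$. For a plane $P$, the half-turn $H_P$ is the composition of reflections in two orthogonal hyperplanes intersecting in $P$. *)

theory Defs
  imports "HOL-Analysis.Analysis"
begin

text \<open>Hyperboloid model of hyperbolic 4-space inside Minkowski space
  R^{4,1} = real^4 \<times> real (space part, time part).\<close>

type_synonym mpt = "(real^4) \<times> real"

definition mink :: "mpt \<Rightarrow> mpt \<Rightarrow> real" where
  "mink p q = fst p \<bullet> fst q - snd p * snd q"

definition H4 :: "mpt set" where
  "H4 = {p. mink p p = -1 \<and> snd p > 0}"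

text \<open>A plane (2-dimensional totally geodesic subspace): nonempty
  intersection of H4 with a 3-dimensional linear subspace.\<close>
definition is_plane :: "mpt set \<Rightarrow> bool" where
  "is_plane P \<longleftrightarrow> (\<exists>V. subspace V \<and> dim V = 3 \<and> P = V \<inter> H4 \<and> P \<noteq> {})"

definition hyperplane :: "mpt \<Rightarrow> mpt set" where
  "hyperplane n = {p \<in> H4. mink n p = 0}"

definition refl :: "mpt \<Rightarrow> mpt \<Rightarrow> mpt" where
  "refl n p = p - (2 * mink p n / mink n n) *\<^sub>R n"

definition is_half_turn :: "mpt set \<Rightarrow> (mpt \<Rightarrow> mpt) \<Rightarrow> bool" where
  "is_half_turn P f \<longleftrightarrow> (\<exists>n1 n2. mink n1 n1 > 0 \<and> mink n2 n2 > 0 \<and> mink n1 n2 = 0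
      \<and> hyperplane n1 \<inter> hyperplane n2 = P \<and> f = refl n1 \<circ> refl n2)"

text \<open>Boundary at infinity, via the Klein (projective) model: the ideal
  boundary is the unit sphere of real^4.\<close>
definition klein :: "mpt \<Rightarrow> real^4" where
  "klein p = (1 / snd p) *\<^sub>R fst p"

definition bdry_inf :: "mpt set \<Rightarrow> (real^4) set" where
  "bdry_inf S = closure (klein ` S) \<inter> sphere 0 1"

text \<open>An ideal point xi (unit vector) is fixed by a (linear) isometry f
  iff f maps the null ray through (xi,1) to itself.\<close>
definition fixes_ideal :: "(mpt \<Rightarrow> mpt) \<Rightarrow> real^4 \<Rightarrow> bool" where
  "fixes_ideal f xi \<longleftrightarrow> xi \<in> sphere 0 1 \<and> (\<exists>c>0. f (xi, 1) = c *\<^sub>R (xi, 1))"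

definition parabolic :: "(mpt \<Rightarrow> mpt) \<Rightarrow> bool" where
  "parabolic f \<longleftrightarrow> (\<forall>p\<in>H4. f p \<noteq> p) \<and> (\<exists>!xi. fixes_ideal f xi)"

end

theory Submission
  imports Defs
begin

text \<open>A half-turn is a linear Lorentz involution h with \<open>\<langle>x, h x\<rangle> \<le> \<langle>x, x\<rangle>\<close>, equality
  only on its fixed vectors. If \<open>hP (hQ x) = x\<close> then \<open>x + hP x\<close> is fixed by both
  half-turns; since P and Q are disjoint, such common fixed vectors are not timelike,
  which forces \<open>\<langle>x, x\<rangle> + \<langle>x, hP x\<rangle> \<ge> 0\<close>. For x in H4 the left side is at most -2,
  so \<open>hP \<circ> hQ\<close> has no fixed point. The common ideal point \<xi> of P and Q is fixed by
  both half-turns; for any other null eigenvector e of \<open>hP \<circ> hQ\<close> one gets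
  \<open>\<langle>(\<xi>,1), e\<rangle> \<ge> 0\<close>, which for unit vectors means e lies on the ray of (\<xi>,1).\<close>

lemma mink_commute: "mink x y = mink y x"
  by (simp add: mink_def inner_commute mult.commute)

lemma mink_add_left [simp]: "mink (x + y) z = mink x z + mink y z"
  by (simp add: mink_def inner_add_left algebra_simps)

lemma mink_add_right [simp]: "mink z (x + y) = mink z x + mink z y"
  by (simp add: mink_def inner_add_right algebra_simps)

lemma mink_diff_left [simp]: "mink (x - y) z = mink x z - mink y z"
  by (simp add: mink_def inner_diff_left algebra_simps)

lemma mink_diff_right [simp]: "mink z (x - y) = mink z x - mink z y"
  by (simp add: mink_def inner_diff_right algebra_simps)

lemma mink_scaleR_left [simp]: "mink (c *\<^sub>R x) z = c * mink x z"
  by (simp add: mink_def algebra_simps)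

lemma mink_scaleR_right [simp]: "mink z (c *\<^sub>R x) = c * mink z x"
  by (simp add: mink_def algebra_simps)

lemma mink_ideal_point_self: "norm \<xi> = 1 \<Longrightarrow> mink (\<xi>, 1) (\<xi>, 1) = 0"
  by (simp add: mink_def power2_norm_eq_inner[symmetric])

lemma ideal_points_eq_if_mink_nonneg:
  assumes "norm \<xi> = 1" "norm \<eta> = 1" "mink (\<xi>, 1) (\<eta>, 1) \<ge> 0"
  shows "\<xi> = \<eta>"
proof -
  have "\<xi> \<bullet> \<eta> \<ge> 1" "\<xi> \<bullet> \<xi> = 1" "\<eta> \<bullet> \<eta> = 1"
    using assms by (simp_all add: mink_def power2_norm_eq_inner[symmetric])
  then have "norm (\<xi> - \<eta>)^2 \<le> 0"
    by (simp add: power2_norm_eq_inner inner_diff_left inner_diff_right inner_commute)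
  then show ?thesis by simp
qed

lemma timelike_scaleR_in_H4:
  assumes "mink v v < 0"
  obtains c where "c *\<^sub>R v \<in> H4"
proof -
  have t: "snd v \<noteq> 0"
  proof
    assume "snd v = 0"
    then have "mink v v = fst v \<bullet> fst v" by (simp add: mink_def)
    then show False using assms by (simp add: inner_ge_zero leD)
  qed
  define s where "s = sqrt (- mink v v)"
  have s: "s > 0" "s^2 = - mink v v" using assms by (auto simp: s_def)
  define c where "c = sgn (snd v) / s"
  have "mink (c *\<^sub>R v) (c *\<^sub>R v) = c^2 * mink v v" by (simp add: power2_eq_square)
  also have "c^2 = 1 / s^2" using t by (simp add: c_def power_divide sgn_if)
  finally have "mink (c *\<^sub>R v) (c *\<^sub>R v) = -1" using s assms by simp
  moreover have "snd (c *\<^sub>R v) = \<bar>snd v\<bar> / s" using t by (simp add: c_def sgn_if)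
  then have "snd (c *\<^sub>R v) > 0" using s t by simp
  ultimately show thesis using that by (auto simp: H4_def)
qed

lemma mink_ideal_point_eq_0:
  assumes "\<xi> \<in> closure (klein ` S)" and "S \<subseteq> hyperplane n"
  shows "mink n (\<xi>, 1) = 0"
proof -
  have "klein ` S \<subseteq> {y. fst n \<bullet> y = snd n}"
  proof
    fix y assume "y \<in> klein ` S"
    then obtain p where p: "p \<in> hyperplane n" "y = klein p" using assms(2) by auto
    then have "fst n \<bullet> fst p = snd n * snd p" "snd p > 0"
      by (simp_all add: hyperplane_def H4_def mink_def)
    then show "y \<in> {y. fst n \<bullet> y = snd n}"
      using p(2) by (simp add: klein_def inner_scaleR_right)
  qed
  then have "closure (klein ` S) \<subseteq> {y. fst n \<bullet> y = snd n}"
    by (intro closure_minimal) (auto intro: closed_hyperplane)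
  with assms(1) show ?thesis by (auto simp: mink_def)
qed

lemma mink_refl:
  assumes "mink n n \<noteq> 0"
  shows "mink (refl n x) (refl n y) = mink x y"
proof -
  define a where "a = 2 * mink x n / mink n n"
  define b where "b = 2 * mink y n / mink n n"
  have "mink (refl n x) (refl n y) = mink x y - b * mink x n - a * mink n y + a * b * mink n n"
    unfolding refl_def a_def[symmetric] b_def[symmetric] by (simp add: algebra_simps)
  also have "a * b * mink n n = 4 * mink x n * mink y n / mink n n"
    using assms by (simp add: a_def b_def)
  finally show ?thesis
    using assms by (simp add: a_def b_def mink_commute[of n y] add_divide_distrib diff_divide_distrib)
qed

definition half_turn_map :: "mpt \<Rightarrow> mpt \<Rightarrow> mpt \<Rightarrow> mpt" where
  "half_turn_map n1 n2 x =
     x - (2 * mink x n2 / mink n2 n2) *\<^sub>R n2 - (2 * mink x n1 / mink n1 n1) *\<^sub>R n1"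

lemma refl_comp_refl_orthogonal:
  "mink n1 n2 = 0 \<Longrightarrow> refl n1 \<circ> refl n2 = half_turn_map n1 n2"
  unfolding refl_def half_turn_map_def by (auto simp: mink_commute[of n2 n1] algebra_simps)

lemma linear_half_turn_map: "linear (half_turn_map n1 n2)"
  by (rule linearI) (simp_all add: half_turn_map_def add_divide_distrib algebra_simps)

context
  fixes n1 n2 :: mpt
  assumes spacelike: "mink n1 n1 > 0" "mink n2 n2 > 0" and orthogonal: "mink n1 n2 = 0"
begin

lemma mink_half_turn_map:
  "mink (half_turn_map n1 n2 x) (half_turn_map n1 n2 y) = mink x y"
  using spacelike orthogonal refl_comp_refl_orthogonal[of n1 n2]
  by (metis comp_apply less_irrefl mink_refl)

lemma mink_half_turn_map_normal:
  "mink (half_turn_map n1 n2 x) n1 = - mink x n1"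
  "mink (half_turn_map n1 n2 x) n2 = - mink x n2"
  using spacelike orthogonal by (simp_all add: half_turn_map_def mink_commute[of n2 n1])

lemma half_turn_map_involution: "half_turn_map n1 n2 (half_turn_map n1 n2 x) = x"
  by (subst (1) half_turn_map_def, simp add: mink_half_turn_map_normal, simp add: half_turn_map_def)

lemma half_turn_map_fixed_iff:
  "half_turn_map n1 n2 x = x \<longleftrightarrow> mink x n1 = 0 \<and> mink x n2 = 0"
proof
  assume "half_turn_map n1 n2 x = x"
  then show "mink x n1 = 0 \<and> mink x n2 = 0"
    using mink_half_turn_map_normal[of x] by simp
qed (simp add: half_turn_map_def)

lemma mink_self_half_turn_map:
  "mink x (half_turn_map n1 n2 x) =
     mink x x - 2 * (mink x n2)^2 / mink n2 n2 - 2 * (mink x n1)^2 / mink n1 n1"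
  by (simp add: half_turn_map_def power2_eq_square)

lemma mink_self_half_turn_map_le: "mink x (half_turn_map n1 n2 x) \<le> mink x x"
proof -
  have "(mink x n2)^2 / mink n2 n2 \<ge> 0" "(mink x n1)^2 / mink n1 n1 \<ge> 0"
    using spacelike by auto
  then show ?thesis by (simp add: mink_self_half_turn_map)
qed

lemma mink_self_half_turn_map_eq_imp_fixed:
  assumes "mink x (half_turn_map n1 n2 x) = mink x x"
  shows "half_turn_map n1 n2 x = x"
proof -
  have "(mink x n2)^2 / mink n2 n2 \<ge> 0" "(mink x n1)^2 / mink n1 n1 \<ge> 0"
    using spacelike by auto
  then have "(mink x n2)^2 / mink n2 n2 = 0" "(mink x n1)^2 / mink n1 n1 = 0"
    using assms unfolding mink_self_half_turn_map by linarith+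
  then show ?thesis using spacelike by (simp add: half_turn_map_fixed_iff)
qed

end

lemma is_half_turnE:
  assumes "is_half_turn P h"
  obtains n1 n2 where "mink n1 n1 > 0" "mink n2 n2 > 0" "mink n1 n2 = 0"
    "P = hyperplane n1 \<inter> hyperplane n2" "h = half_turn_map n1 n2"
  using assms refl_comp_refl_orthogonal unfolding is_half_turn_def by metis

locale mink_involution =
  fixes f :: "mpt \<Rightarrow> mpt"
  assumes linear: "linear f"
    and isometry: "mink (f x) (f y) = mink x y"
    and involution: "f (f x) = x"
    and mink_self_le: "mink x (f x) \<le> mink x x"
    and mink_self_eq_imp_fixed: "mink x (f x) = mink x x \<Longrightarrow> f x = x"

locale disjoint_involutions = f: mink_involution f + g: mink_involution g for f g +
  assumes common_fixed_not_timelike: "f v = v \<Longrightarrow> g v = v \<Longrightarrow> mink v v \<ge> 0"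
begin

lemma comp_fixed_imp_eq: "f (g x) = x \<Longrightarrow> g x = f x"
  by (metis f.involution)

lemma comp_fixed_imp_common_fixed:
  assumes "f (g x) = x"
  shows "f (x + f x) = x + f x" "g (x + f x) = x + f x"
proof -
  have "g (f x) = x" using comp_fixed_imp_eq[OF assms] g.involution by metis
  then show "f (x + f x) = x + f x" "g (x + f x) = x + f x"
    using comp_fixed_imp_eq[OF assms] f.involution
    by (simp_all add: linear_add[OF f.linear] linear_add[OF g.linear] add.commute)
qed

lemma comp_fixed_imp_mink_nonneg:
  assumes "f (g x) = x"
  shows "mink x x + mink x (f x) \<ge> 0"
proof -
  have "mink (x + f x) (x + f x) \<ge> 0"
    using comp_fixed_imp_common_fixed[OF assms] by (rule common_fixed_not_timelike)
  then show ?thesis by (simp add: f.isometry mink_commute[of "f x" x])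
qed

lemma comp_no_fixed_point_in_H4: "p \<in> H4 \<Longrightarrow> f (g p) \<noteq> p"
  using comp_fixed_imp_mink_nonneg f.mink_self_le[of p] by (fastforce simp: H4_def)

lemma null_comp_fixed_imp_common_fixed:
  assumes "mink x x = 0" "f (g x) = x"
  shows "f x = x" "g x = x"
proof -
  show "f x = x"
    using comp_fixed_imp_mink_nonneg[OF assms(2)] f.mink_self_le[of x] assms(1)
    by (intro f.mink_self_eq_imp_fixed) simp
  then show "g x = x" using comp_fixed_imp_eq[OF assms(2)] by simp
qed

lemma mink_null_eigenvector_nonneg:
  assumes "f e0 = e0" "g e0 = e0" "mink e0 e0 = 0" and "mink e e = 0" "f (g e) = c *\<^sub>R e"
  shows "mink e0 e \<ge> 0"
proof (cases "c = 1")
  case True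
  then have "f e = e" "g e = e" using null_comp_fixed_imp_common_fixed assms(4,5) by simp_all
  then have "mink (e + e0) (e + e0) \<ge> 0"
    using assms(1,2) by (intro common_fixed_not_timelike)
      (simp_all add: linear_add[OF f.linear] linear_add[OF g.linear])
  then show ?thesis using assms(3,4) by (simp add: mink_commute[of e e0])
next
  case False
  have "mink (f (g e0)) (f (g e)) = mink e0 e" by (simp add: f.isometry g.isometry)
  then have "c * mink e0 e = mink e0 e" using assms(1,2,5) by simp
  then show ?thesis using False by simp
qed

end

lemma half_turn_mink_involution:
  assumes "is_half_turn P h"
  shows "mink_involution h"
proof -
  obtain n1 n2 where n: "mink n1 n1 > 0" "mink n2 n2 > 0" "mink n1 n2 = 0"
    and h: "h = half_turn_map n1 n2"
    using assms by (rule is_half_turnE)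
  show ?thesis
    unfolding h using n
    by unfold_locales
      (simp_all add: linear_add[OF linear_half_turn_map] linear_scale[OF linear_half_turn_map]
        mink_half_turn_map half_turn_map_involution
        mink_self_half_turn_map_le mink_self_half_turn_map_eq_imp_fixed)
qed

lemma half_turn_fixed_point_in_plane:
  assumes "is_half_turn P h" "p \<in> H4" "h p = p"
  shows "p \<in> P"
proof -
  obtain n1 n2 where n: "mink n1 n1 > 0" "mink n2 n2 > 0" "mink n1 n2 = 0"
    and P: "P = hyperplane n1 \<inter> hyperplane n2" and h: "h = half_turn_map n1 n2"
    using assms(1) by (rule is_half_turnE)
  show ?thesis
    using assms(2,3) half_turn_map_fixed_iff[OF n] unfolding P h hyperplane_def
    by (simp add: mink_commute[of p])
qed

lemma half_turn_fixes_ideal_point: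
  assumes "is_half_turn P h" "\<xi> \<in> bdry_inf P"
  shows "h (\<xi>, 1) = (\<xi>, 1)"
proof -
  obtain n1 n2 where n: "mink n1 n1 > 0" "mink n2 n2 > 0" "mink n1 n2 = 0"
    and P: "P = hyperplane n1 \<inter> hyperplane n2" and h: "h = half_turn_map n1 n2"
    using assms(1) by (rule is_half_turnE)
  have "\<xi> \<in> closure (klein ` P)" using assms(2) by (simp add: bdry_inf_def)
  then have "mink n1 (\<xi>, 1) = 0" "mink n2 (\<xi>, 1) = 0"
    using mink_ideal_point_eq_0 unfolding P by blast+
  then show ?thesis
    unfolding h using half_turn_map_fixed_iff[OF n] by (simp add: mink_commute[of _ "(\<xi>, 1)"])
qed

lemma half_turns_disjoint_involutions:
  assumes "is_half_turn P hP" "is_half_turn Q hQ" "P \<inter> Q = {}"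
  shows "disjoint_involutions hP hQ"
proof -
  interpret f: mink_involution hP using assms(1) by (rule half_turn_mink_involution)
  interpret g: mink_involution hQ using assms(2) by (rule half_turn_mink_involution)
  show ?thesis
  proof unfold_locales
    fix v assume fixed: "hP v = v" "hQ v = v"
    show "mink v v \<ge> 0"
    proof (rule ccontr)
      assume "\<not> mink v v \<ge> 0"
      then have "mink v v < 0" by simp
      then obtain c where p: "c *\<^sub>R v \<in> H4" by (rule timelike_scaleR_in_H4)
      have "hP (c *\<^sub>R v) = c *\<^sub>R v" "hQ (c *\<^sub>R v) = c *\<^sub>R v"
        using fixed by (simp_all add: linear_scale[OF f.linear] linear_scale[OF g.linear])
      then have "c *\<^sub>R v \<in> P \<inter> Q"
        using half_turn_fixed_point_in_plane assms(1,2) p by blast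
      then show False using assms(3) by blast
    qed
  qed
qed

theorem lemma6p4:
  fixes P Q :: "mpt set" and hP hQ :: "mpt \<Rightarrow> mpt"
  assumes "is_plane P" and "is_plane Q"
    and "P \<noteq> Q" and "P \<inter> Q = {}"
    and "\<exists>\<xi>. bdry_inf P \<inter> bdry_inf Q = {\<xi>}"
    and "is_half_turn P hP" and "is_half_turn Q hQ"
  shows "parabolic (hP \<circ> hQ)"
proof -
  interpret disjoint_involutions hP hQ
    using assms(6,7,4) by (rule half_turns_disjoint_involutions)
  obtain \<xi> where \<xi>: "\<xi> \<in> bdry_inf P" "\<xi> \<in> bdry_inf Q" using assms(5) by blast
  have \<xi>_unit: "norm \<xi> = 1" using \<xi>(1) by (simp add: bdry_inf_def)
  have fixed: "hP (\<xi>, 1) = (\<xi>, 1)" "hQ (\<xi>, 1) = (\<xi>, 1)"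
    using half_turn_fixes_ideal_point assms(6,7) \<xi> by blast+
  have "fixes_ideal (hP \<circ> hQ) \<xi>"
    using \<xi>_unit fixed by (auto simp: fixes_ideal_def intro: exI[of _ 1])
  moreover have "\<eta> = \<xi>" if "fixes_ideal (hP \<circ> hQ) \<eta>" for \<eta>
  proof -
    have "norm \<eta> = 1 \<and> (\<exists>c>0. hP (hQ (\<eta>, 1)) = c *\<^sub>R (\<eta>, 1))"
      using that by (simp only: fixes_ideal_def comp_apply mem_sphere_0)
    then obtain c where \<eta>: "norm \<eta> = 1" "hP (hQ (\<eta>, 1)) = c *\<^sub>R (\<eta>, 1)" by blast
    then have "mink (\<xi>, 1) (\<eta>, 1) \<ge> 0"
      using fixed mink_ideal_point_self \<xi>_unit by (intro mink_null_eigenvector_nonneg[where c = c]) simp_all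
    then show ?thesis using ideal_points_eq_if_mink_nonneg \<xi>_unit \<eta>(1) by metis
  qed
  ultimately show ?thesis
    unfolding parabolic_def using comp_no_fixed_point_in_H4 by auto
qed

end
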